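(* For every $n \geq 1$, the map $\psi$ is a bijection from $\mathcal{S}^{(1)}_n$, the set of skeletons of planar linear normal $\lambda$-terms with $n$ atoms, onto $\mathcal{V}_{n-1}$, the set of v-trees with $n-1$ edges.
   Context: $\lambda$-terms, linear (closed, each abstraction binds exactly one atom), normal (no sub-term $(\lambda x.u)\,v$) and planar terms are standard; the skeleton of a term is the plane unary-binary tree (atom $\mapsto$ leaf, application $u\,v \mapsto$ binary node with left subtree from $u$ and right subtree from $v$, abstraction $\mapsto$ unary node), and planarity means the edges from each leaf's parent to its binding unary node, drawn counter-clockwise and entering from the right, do not cross; the number of atoms is the number of leaves. For a unary-binary tree $S$ and node $u$, $S_u$ is the subtree at $u$, and $\operatorname{leaf}, \operatorname{unary}$ count leaves and unary nodes. The map $\psi$: for $S \in \mathcal{S}^{(1)}_n$, let $T$ be the plane tree whose nodes are a new root $r$ and the binary nodes of $S$. For a node $u$ of $T$, let $R(u)$ be the right subtree of $u$ in $S$ if $u$ is a binary node, and $R(r)=S$. The children of $u$ in $T$, from left to right, are $x_1, \ldots, x_m$ where $x_1$ is the first binary node of $R(u)$ reached from its root through a (possibly empty) chain of unary nodes, and $x_{i+1}$ is the left child of $x_i$ in $S$ as long as it is a binary node (no children if $R(u)$ has no binary node). Label each binary node $u$ by $\ell(u) = \operatorname{leaf}(S_v) - \operatorname{unary}(S_v)$, $v$ the right child of $u$ in $S$, and label $r$ by $\ell(r) = \operatorname{leaf}(S_w) - \operatorname{unary}(S_w)$, where $w$ is the first node of $S$ (from the root) that is not unary. Set $\psi(S)=(T,\ell)$.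 A v-tree is a plane tree $T$ with integer node labels $\ell$ such that: (i) leaves have label $0$ or $1$; (ii) every non-root node $u$ with children $v_1,\ldots,v_k$ satisfies $0 \leq \ell(u) \leq 1 + \sum_{i=1}^k \ell(v_i)$; (iii) the root $r$ with children $v_1,\ldots,v_k$ satisfies $\ell(r) = 1 + \sum_{i=1}^k \ell(v_i)$. Its size is its number of edges. *)

theory Defs
  imports Main
begin

datatype lterm = Var nat | App lterm lterm | Lam nat lterm

inductive planar :: "nat list \<Rightarrow> lterm \<Rightarrow> bool" where
  pl_var: "planar [x] (Var x)"
| pl_app: "planar G1 u \<Longrightarrow> planar G2 v \<Longrightarrow> planar (G1 @ G2) (App u v)"
| pl_lam: "x \<notin> set G \<Longrightarrow> planar (G @ [x]) t \<Longrightarrow> planar G (Lam x t)"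

fun normal :: "lterm \<Rightarrow> bool" where
  "normal (Var x) = True"
| "normal (App (Lam x u) v) = False"
| "normal (App u v) = (normal u \<and> normal v)"
| "normal (Lam x t) = normal t"

datatype ubtree = Leaf | Unary ubtree | Bin ubtree ubtree

fun skel :: "lterm \<Rightarrow> ubtree" where
  "skel (Var x) = Leaf"
| "skel (App u v) = Bin (skel u) (skel v)"
| "skel (Lam x t) = Unary (skel t)"

fun leaves :: "ubtree \<Rightarrow> nat" where
  "leaves Leaf = 1"
| "leaves (Unary t) = leaves t"
| "leaves (Bin l r) = leaves l + leaves r"

fun unaries :: "ubtree \<Rightarrow> nat" where
  "unaries Leaf = 0"
| "unaries (Unary t) = Suc (unaries t)"
| "unaries (Bin l r) = unaries l + unaries r"

definition S1 :: "nat \<Rightarrow> ubtree set" where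
  "S1 n = {skel t | t. planar [] t \<and> normal t \<and> leaves (skel t) = n}"

datatype ltree = Node int "ltree list"

fun lab :: "ltree \<Rightarrow> int" where
  "lab (Node a ts) = a"

definition lbl :: "ubtree \<Rightarrow> int" where
  "lbl s = int (leaves s) - int (unaries s)"

fun strip :: "ubtree \<Rightarrow> ubtree" where
  "strip (Unary t) = strip t"
| "strip t = t"

text \<open>\<open>ch R\<close>: the list of T-children for a node u with \<open>R(u) = R\<close>: starting from the first
  binary node x1 of R reached through a chain of unary nodes, then x(i+1) = left child of x(i)
  as long as it is binary. \<open>lch\<close> continues along left children.\<close>
fun ch :: "ubtree \<Rightarrow> ltree list" and lch :: "ubtree \<Rightarrow> ltree list" where
  "ch Leaf = []"
| "ch (Unary t) = ch t"
| "ch (Bin l r) = Node (lbl r) (ch r) # lch l"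
| "lch (Bin l r) = Node (lbl r) (ch r) # lch l"
| "lch Leaf = []"
| "lch (Unary t) = []"

definition psi :: "ubtree \<Rightarrow> ltree" where
  "psi S = Node (lbl (strip S)) (ch S)"

fun vnode :: "ltree \<Rightarrow> bool" where
  "vnode (Node a ts) =
     ((ts = [] \<longrightarrow> a = 0 \<or> a = 1) \<and>
      0 \<le> a \<and> a \<le> 1 + sum_list (map lab ts) \<and>
      (\<forall>t\<in>set ts. vnode t))"

fun vtree :: "ltree \<Rightarrow> bool" where
  "vtree (Node a ts) =
     ((ts = [] \<longrightarrow> a = 0 \<or> a = 1) \<and>
      a = 1 + sum_list (map lab ts) \<and>
      (\<forall>t\<in>set ts. vnode t))"

fun nodes :: "ltree \<Rightarrow> nat" where
  "nodes (Node a ts) = Suc (sum_list (map nodes ts))"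

text \<open>Size of a plane tree = number of edges = number of nodes - 1.\<close>
definition V :: "nat \<Rightarrow> ltree set" where
  "V m = {T. vtree T \<and> nodes T - 1 = m}"

end

theory Submission
  imports Defs
begin

text \<open>Planarity forces an abstraction to bind the rightmost free atom of its body, so a planar
  linear term is determined up to renaming by its skeleton, and the skeletons are the trees in
  which every abstraction has a free atom to bind. In a normal skeleton (no abstraction as the
  left child of an application) the left spine below the top chain of unary nodes is a comb of
  binary nodes, so every subtree is recovered from its \<open>psi\<close>-node: the children are the
  \<open>psi\<close>-nodes of the right subtrees along that comb, and the length of the chain is the label
  deficit \<open>1 + \<Sum> children - label\<close>. The v-node inequalities say exactly that this deficit
  and the number of free atoms are nonnegative; at the root, where no atom is free, the label
  is replaced by \<open>1 + \<Sum> children\<close>.\<close>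

lemma lbl_Leaf [simp]: "lbl Leaf = 1"
  by (simp add: lbl_def)

lemma lbl_Unary [simp]: "lbl (Unary t) = lbl t - 1"
  by (simp add: lbl_def)

lemma lbl_Bin [simp]: "lbl (Bin l r) = lbl l + lbl r"
  by (simp add: lbl_def)

lemma lbl_le_lbl_strip: "lbl S \<le> lbl (strip S)"
  by (induction S) auto

text \<open>On skeletons of planar terms \<open>lbl\<close> counts the free atoms.\<close>

fun planar_skeleton :: "ubtree \<Rightarrow> bool" where
  "planar_skeleton Leaf = True"
| "planar_skeleton (Unary t) = (planar_skeleton t \<and> 1 \<le> lbl t)"
| "planar_skeleton (Bin l r) = (planar_skeleton l \<and> planar_skeleton r)"

fun normal_skeleton :: "ubtree \<Rightarrow> bool" where
  "normal_skeleton Leaf = True"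
| "normal_skeleton (Unary t) = normal_skeleton t"
| "normal_skeleton (Bin (Unary l) r) = False"
| "normal_skeleton (Bin l r) = (normal_skeleton l \<and> normal_skeleton r)"

lemma planar_skeleton_lbl_nonneg: "planar_skeleton S \<Longrightarrow> 0 \<le> lbl S"
  by (induction S) auto

lemma planar_skeleton_skel:
  "planar G t \<Longrightarrow> planar_skeleton (skel t) \<and> lbl (skel t) = int (length G)"
  by (induction rule: planar.induct) auto

lemma normal_skeleton_skel: "normal t \<Longrightarrow> normal_skeleton (skel t)"
  by (induction t rule: normal.induct) auto

lemma planar_normal_term_of_skeleton:
  assumes "planar_skeleton S" and "normal_skeleton S" and "lbl S = int (length G)"
  shows "\<exists>t. planar G t \<and> normal t \<and> skel t = S"
  using assms
proof (induction S arbitrary: G)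
  case Leaf
  then obtain x where "G = [x]"
    by (cases G) auto
  then show ?case
    by (intro exI[of _ "Var x"]) (auto intro: planar.intros)
next
  case (Unary s)
  obtain x :: nat where x: "x \<notin> set G"
    using ex_new_if_finite[OF infinite_UNIV_nat] by blast
  have "lbl s = int (length (G @ [x]))"
    using Unary.prems(3) by simp
  with Unary.IH[of "G @ [x]"] Unary.prems obtain t
    where "planar (G @ [x]) t" "normal t" "skel t = s"
    by auto
  with x show ?case
    by (intro exI[of _ "Lam x t"]) (auto intro: planar.intros)
next
  case (Bin l r)
  define k where "k = nat (lbl l)"
  have "0 \<le> lbl l" "0 \<le> lbl r"
    using Bin.prems(1) planar_skeleton_lbl_nonneg by auto
  with Bin.prems(3) have "int k = lbl l" "k \<le> length G"
    by (simp_all add: k_def)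
  with Bin.prems(3) have "lbl l = int (length (take k G))" "lbl r = int (length (drop k G))"
    by (simp_all add: min_def of_nat_diff)
  moreover have "normal_skeleton l" "normal_skeleton r"
    using Bin.prems(2) by (cases l; simp)+
  ultimately obtain u v where u: "planar (take k G) u" "normal u" "skel u = l"
    and v: "planar (drop k G) v" "normal v" "skel v = r"
    using Bin.IH(1)[of "take k G"] Bin.IH(2)[of "drop k G"] Bin.prems(1) by auto
  have "planar (take k G @ drop k G) (App u v)"
    using u v by (intro planar.intros)
  moreover have "normal (App u v)"
    using u v Bin.prems(2) by (cases u) auto
  ultimately show ?case
    using u v by (intro exI[of _ "App u v"]) auto
qed

lemma S1_eq:
  "S1 n = {S. planar_skeleton S \<and> normal_skeleton S \<and> lbl S = 0 \<and> leaves S = n}"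
  (is "_ = ?R")
proof (intro set_eqI iffI)
  fix S
  assume "S \<in> S1 n"
  then obtain t where "planar [] t" "normal t" "skel t = S" "leaves S = n"
    by (auto simp: S1_def)
  then show "S \<in> ?R"
    using planar_skeleton_skel[of "[]" t] normal_skeleton_skel[of t] by auto
next
  fix S
  assume "S \<in> ?R"
  then obtain t where "planar [] t" "normal t" "skel t = S" "leaves S = n"
    using planar_normal_term_of_skeleton[of S "[]"] by auto
  then show "S \<in> S1 n"
    unfolding S1_def by blast
qed

definition psi_node :: "ubtree \<Rightarrow> ltree" where
  "psi_node S = Node (lbl S) (ch S)"

lemma lab_psi_node [simp]: "lab (psi_node S) = lbl S"
  by (simp add: psi_node_def)

lemma ch_Bin: "normal_skeleton (Bin l r) \<Longrightarrow> ch (Bin l r) = psi_node r # ch l"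
  by (cases l) (auto simp: psi_node_def)

lemma lbl_strip: "normal_skeleton S \<Longrightarrow> lbl (strip S) = 1 + sum_list (map lab (ch S))"
proof (induction S)
  case (Bin l r)
  then show ?case
    by (cases l) (auto simp: ch_Bin)
qed auto

lemma nodes_psi_node: "normal_skeleton S \<Longrightarrow> nodes (psi_node S) = leaves S"
proof (induction S)
  case (Bin l r)
  then show ?case
    by (cases l) (auto simp: ch_Bin psi_node_def)
qed (auto simp: psi_node_def)

lemma vnode_psi_nodeI:
  assumes "planar_skeleton S" and "normal_skeleton S" and "\<forall>t\<in>set (ch S). vnode t"
  shows "vnode (psi_node S)"
proof -
  have "ch S = [] \<Longrightarrow> lbl S \<le> 1"
    using lbl_strip[OF assms(2)] lbl_le_lbl_strip[of S] by simp
  then show ?thesis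
    using assms planar_skeleton_lbl_nonneg[of S] lbl_le_lbl_strip[of S] lbl_strip[of S]
    by (auto simp: psi_node_def)
qed

lemma vnode_psi_node: "planar_skeleton S \<Longrightarrow> normal_skeleton S \<Longrightarrow> vnode (psi_node S)"
proof (induction S)
  case Leaf
  then show ?case
    by (simp add: psi_node_def)
next
  case (Unary S)
  then have "\<forall>t\<in>set (ch (Unary S)). vnode t"
    by (simp add: psi_node_def)
  with Unary.prems show ?case
    by (rule vnode_psi_nodeI)
next
  case (Bin l r)
  then have "normal_skeleton l" "normal_skeleton r"
    by (cases l; simp)+
  with Bin have "vnode (psi_node r)" "vnode (psi_node l)"
    by auto
  then have "\<forall>t\<in>set (ch (Bin l r)). vnode t"
    unfolding ch_Bin[OF Bin.prems(2)] by (simp add: psi_node_def)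
  with Bin.prems show ?case
    by (rule vnode_psi_nodeI)
qed

fun left_comb :: "ubtree list \<Rightarrow> ubtree" where
  "left_comb [] = Leaf"
| "left_comb (S # Ss) = Bin (left_comb Ss) S"

lemma ch_left_comb [simp]: "ch (left_comb Ss) = map psi_node Ss"
  and lch_left_comb [simp]: "lch (left_comb Ss) = map psi_node Ss"
  by (induction Ss) (auto simp: psi_node_def)

lemma lbl_left_comb [simp]: "lbl (left_comb Ss) = 1 + sum_list (map lbl Ss)"
  by (induction Ss) auto

lemma normal_skeleton_left_comb:
  "\<forall>S\<in>set Ss. normal_skeleton S \<Longrightarrow> normal_skeleton (left_comb Ss)"
proof (induction Ss)
  case (Cons S Ss)
  then show ?case
    by (cases Ss) auto
qed simp

lemma planar_skeleton_left_comb: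
  "\<forall>S\<in>set Ss. planar_skeleton S \<Longrightarrow> planar_skeleton (left_comb Ss)"
  by (induction Ss) auto

lemma ch_funpow_Unary [simp]: "ch ((Unary ^^ k) S) = ch S"
  by (induction k) auto

lemma lbl_funpow_Unary [simp]: "lbl ((Unary ^^ k) S) = lbl S - int k"
  by (induction k) auto

lemma normal_skeleton_funpow_Unary [simp]: "normal_skeleton ((Unary ^^ k) S) = normal_skeleton S"
  by (induction k) auto

lemma planar_skeleton_funpow_Unary:
  "planar_skeleton S \<Longrightarrow> int k \<le> lbl S \<Longrightarrow> planar_skeleton ((Unary ^^ k) S)"
  by (induction k) auto

lemma funpow_Unary_strip: "(Unary ^^ nat (lbl (strip S) - lbl S)) (strip S) = S"
proof (induction S)
  case (Unary S)
  have "nat (lbl (strip (Unary S)) - lbl (Unary S)) = Suc (nat (lbl (strip S) - lbl S))"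
    using lbl_le_lbl_strip[of S] by simp
  with Unary show ?case
    by simp
qed auto


fun psi_node_inv :: "ltree \<Rightarrow> ubtree" where
  "psi_node_inv (Node a ts) =
     (Unary ^^ nat (1 + sum_list (map lab ts) - a)) (left_comb (map psi_node_inv ts))"

lemma left_comb_psi_node_inv_ch:
  "normal_skeleton S \<Longrightarrow> left_comb (map psi_node_inv (ch S)) = strip S"
proof (induction S)
  case (Bin l r)
  then have l: "normal_skeleton l" "strip l = l" and r: "normal_skeleton r"
    by (cases l; simp)+
  with Bin.IH(2) have "psi_node_inv (psi_node r) = r"
    using funpow_Unary_strip[of r] lbl_strip[of r] by (simp add: psi_node_def)
  with Bin.IH(1) l show ?case
    by (simp add: ch_Bin[OF Bin.prems] del: ch.simps)
qed auto

lemma psi_node_inv_psi_node: "normal_skeleton S \<Longrightarrow> psi_node_inv (psi_node S) = S"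
  using left_comb_psi_node_inv_ch[of S] lbl_strip[of S] funpow_Unary_strip[of S]
  by (simp add: psi_node_def)

lemma vnode_lab_nonneg: "vnode T \<Longrightarrow> 0 \<le> lab T"
  by (cases T) auto

lemma sum_list_lab_nonneg: "\<forall>t\<in>set ts. vnode t \<Longrightarrow> 0 \<le> sum_list (map lab ts)"
  by (induction ts) (auto simp: vnode_lab_nonneg)

lemma psi_node_psi_node_inv:
  "vnode T \<Longrightarrow> psi_node (psi_node_inv T) = T \<and>
     planar_skeleton (psi_node_inv T) \<and> normal_skeleton (psi_node_inv T)"
proof (induction T)
  case (Node a ts)
  define Ss where "Ss = map psi_node_inv ts"
  have IH: "psi_node (psi_node_inv t) = t \<and> planar_skeleton (psi_node_inv t) \<and>
      normal_skeleton (psi_node_inv t)" if "t \<in> set ts" for t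
    using Node that by auto
  then have children: "map psi_node Ss = ts"
    by (simp add: Ss_def map_idI)
  have labels: "map lbl Ss = map lab ts"
    using arg_cong[OF children, of "map lab"] by (simp add: comp_def)
  then have lbl_comb: "lbl (left_comb Ss) = 1 + sum_list (map lab ts)"
    by simp
  have a: "0 \<le> a" "a \<le> 1 + sum_list (map lab ts)"
    using Node.prems by auto
  define k where "k = nat (lbl (left_comb Ss) - a)"
  have inv: "psi_node_inv (Node a ts) = (Unary ^^ k) (left_comb Ss)"
    unfolding k_def lbl_comb unfolding Ss_def by simp
  have k: "lbl (left_comb Ss) - int k = a" "int k \<le> lbl (left_comb Ss)"
    using a by (simp_all add: k_def labels)
  have "planar_skeleton (left_comb Ss)" "normal_skeleton (left_comb Ss)"
    using IH by (auto simp: Ss_def intro!: planar_skeleton_left_comb normal_skeleton_left_comb)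
  with k show ?case
    unfolding inv psi_node_def by (simp add: children planar_skeleton_funpow_Unary)
qed

lemma bij_betw_psi_node:
  "bij_betw psi_node
     {S. planar_skeleton S \<and> normal_skeleton S \<and> lbl S = a \<and> leaves S = m}
     {T. vnode T \<and> lab T = a \<and> nodes T = m}"
  (is "bij_betw _ ?A ?B")
proof (rule bij_betw_byWitness[where f' = psi_node_inv])
  show "\<forall>S\<in>?A. psi_node_inv (psi_node S) = S"
    using psi_node_inv_psi_node by blast
  show "\<forall>T\<in>?B. psi_node (psi_node_inv T) = T"
    using psi_node_psi_node_inv by blast
  show "psi_node ` ?A \<subseteq> ?B"
    using vnode_psi_node nodes_psi_node by auto
  show "psi_node_inv ` ?B \<subseteq> ?A"
  proof (intro image_subsetI)
    fix T
    assume T: "T \<in> ?B"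
    then have S: "psi_node (psi_node_inv T) = T"
      "planar_skeleton (psi_node_inv T)" "normal_skeleton (psi_node_inv T)"
      using psi_node_psi_node_inv by auto
    then have "lbl (psi_node_inv T) = lab T" "leaves (psi_node_inv T) = nodes T"
      using lab_psi_node nodes_psi_node by metis+
    with T S show "psi_node_inv T \<in> ?A"
      by simp
  qed
qed

fun relabel_root :: "ltree \<Rightarrow> ltree" where
  "relabel_root (Node a ts) = Node (1 + sum_list (map lab ts)) ts"

lemma psi_eq_relabel_root: "normal_skeleton S \<Longrightarrow> psi S = relabel_root (psi_node S)"
  by (simp add: psi_def psi_node_def lbl_strip)

lemma vtree_iff:
  "vtree (Node a ts) \<longleftrightarrow> a = 1 + sum_list (map lab ts) \<and> (\<forall>t\<in>set ts. vnode t)"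
  by auto

lemma vnode_Node_0_iff: "vnode (Node 0 ts) \<longleftrightarrow> (\<forall>t\<in>set ts. vnode t)"
  using sum_list_lab_nonneg by auto

lemma bij_betw_relabel_root:
  assumes "1 \<le> n"
  shows "bij_betw relabel_root {T. vnode T \<and> lab T = 0 \<and> nodes T = n} (V (n - 1))"
    (is "bij_betw _ ?A _")
proof (rule bij_betw_byWitness[where f' = "case_ltree (\<lambda>_ ts. Node 0 ts)"])
  have "case_ltree (\<lambda>_ ts. Node 0 ts) (relabel_root T) = T \<and> relabel_root T \<in> V (n - 1)"
    if "T \<in> ?A" for T
    using that by (cases T) (simp add: V_def vtree_iff vnode_Node_0_iff)
  then show "\<forall>T\<in>?A. case_ltree (\<lambda>_ ts. Node 0 ts) (relabel_root T) = T"
    and "relabel_root ` ?A \<subseteq> V (n - 1)"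
    by auto
  have "relabel_root (case_ltree (\<lambda>_ ts. Node 0 ts) T) = T \<and>
      case_ltree (\<lambda>_ ts. Node 0 ts) T \<in> ?A"
    if "T \<in> V (n - 1)" for T
    using that assms by (cases T) (simp add: V_def vtree_iff vnode_Node_0_iff sum_list_lab_nonneg)
  then show "\<forall>T\<in>V (n - 1). relabel_root (case_ltree (\<lambda>_ ts. Node 0 ts) T) = T"
    and "case_ltree (\<lambda>_ ts. Node 0 ts) ` V (n - 1) \<subseteq> ?A"
    by auto
qed

theorem proposition10:
  fixes n :: nat
  assumes "n \<ge> 1"
  shows "bij_betw psi (S1 n) (V (n - 1))"
proof -
  have "bij_betw (relabel_root \<circ> psi_node) (S1 n) (V (n - 1))"
    unfolding S1_eq
    using bij_betw_psi_node bij_betw_relabel_root[OF assms] by (rule bij_betw_trans)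
  moreover have "psi S = (relabel_root \<circ> psi_node) S" if "S \<in> S1 n" for S
    using that by (simp add: S1_eq psi_eq_relabel_root)
  ultimately show ?thesis
    using bij_betw_cong by metis
qed

end
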